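(* Let $N\in\mathbb{N}$ with $N\ge3$, let $n\in\mathbb{N}$ with $n\ge17$, and let $x\in\mathbb{R}$ with $|x|\le n^{-\frac18}$. Put \[ y:=\frac{\pi\sqrt{24n+1}}{3\sqrt2}\sum_{m=2}^{2N+5}(-1)^m\binom{\frac12}{m}x^{2m}. \] Then there are real numbers $E_1,E_2$ with $|E_1|\le\frac{0.7^{N+2}}{(N+2)!}x^{4N+8}n^{\frac{N+2}{2}}$ and $|E_2|\le 0.4\,n^{-\frac{N+2}{2}}$ such that \[ e^{\frac{\pi}{3\sqrt2}\sqrt{(1-x^2)(24n+1)}}=e^{\frac{\pi\sqrt{24n+1}}{3\sqrt2}\left(1-\frac{x^2}{2}\right)}\left(\sum_{j=0}^{N+1}\frac{y^j}{j!}+E_1\right)(1+E_2). \] *)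

theory Defs
  imports "HOL-Analysis.Analysis"
begin

end

theory Submission
  imports Defs
begin

(*
  With t = x^2 and c_m = (-1)^m (1/2 gchoose m), the binomial series gives
  sqrt (1 - t) = 1 - t/2 + S + R, where S = sum_{m=2}^{2N+5} c_m t^m and R is the tail.
  Hence exp (A sqrt (1 - t)) = exp (A (1 - t/2)) * exp (A S) * exp (A R), and y = A S.
  All c_m with m >= 1 are negative and increase towards 0 from c_4 = -5/128 on, so
  S and R are nonpositive with |S| <= 45/256 t^2 and |R| <= 5/64 t^(2N+6).
  Since y <= 0, the Lagrange remainder E1 of the Taylor polynomial of exp at y is at most
  |y|^(N+2)/(N+2)!, and E2 = exp (A R) - 1 satisfies |E2| <= A |R|.  The stated bounds
  follow from A <= 15/4 sqrt n and t <= n^(-1/4).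
*)

definition sqrt_coeff :: "nat \<Rightarrow> real" where
  "sqrt_coeff m = (-1) ^ m * ((1/2) gchoose m)"

lemma sqrt_coeff_Suc: "sqrt_coeff (Suc m) = sqrt_coeff m * ((real m - 1/2) / (real m + 1))"
proof -
  have gchoose_Suc:
    "((1/2::real) gchoose Suc m) = ((1/2) gchoose m) * (1/2 - real m) / (real m + 1)"
    using gbinomial_mult_1[of "1/2::real" m] by (simp add: field_simps)
  show ?thesis
    unfolding sqrt_coeff_def gchoose_Suc by (simp add: field_simps)
qed

lemma sqrt_coeff_0: "sqrt_coeff 0 = 1"
  and sqrt_coeff_1: "sqrt_coeff 1 = -1/2"
  and sqrt_coeff_2: "sqrt_coeff 2 = -1/8"
  and sqrt_coeff_3: "sqrt_coeff 3 = -1/16"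
  and sqrt_coeff_4: "sqrt_coeff 4 = -5/128"
proof -
  show 0: "sqrt_coeff 0 = 1" and 1: "sqrt_coeff 1 = -1/2"
    by (simp_all add: sqrt_coeff_def)
  show 2: "sqrt_coeff 2 = -1/8"
    using sqrt_coeff_Suc[of 1] 1 by (simp add: numeral_2_eq_2)
  show 3: "sqrt_coeff 3 = -1/16"
    using sqrt_coeff_Suc[of 2] 2 by (simp add: numeral_3_eq_3[symmetric])
  show "sqrt_coeff 4 = -5/128"
    using sqrt_coeff_Suc[of 3] 3 by (simp add: eval_nat_numeral)
qed

lemma sqrt_coeff_nonpos: "1 \<le> m \<Longrightarrow> sqrt_coeff m \<le> 0"
proof (induction m rule: dec_induct)
  case base
  show ?case
    by (simp add: sqrt_coeff_def)
next
  case (step k)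
  have "0 \<le> (real k - 1/2) / (real k + 1)"
    using step.hyps by simp
  with step.IH show ?case
    by (simp only: sqrt_coeff_Suc mult_nonpos_nonneg)
qed

lemma sqrt_coeff_mono:
  assumes "1 \<le> k" "k \<le> m"
  shows "sqrt_coeff k \<le> sqrt_coeff m"
  using assms(2)
proof (induction m rule: dec_induct)
  case (step i)
  have "0 \<le> sqrt_coeff i * ((real i - 1/2) / (real i + 1) - 1)"
    using assms(1) step.hyps sqrt_coeff_nonpos[of i] by (intro mult_nonpos_nonpos) auto
  then show ?case
    using step.IH by (simp add: sqrt_coeff_Suc algebra_simps)
qed simp

lemma sums_sqrt_coeff:
  fixes t :: real
  assumes "\<bar>t\<bar> < 1"
  shows "(\<lambda>m. sqrt_coeff m * t ^ m) sums sqrt (1 - t)"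
proof -
  have "sqrt_coeff m * t ^ m = ((1/2) gchoose m) * (-t) ^ m" for m
    unfolding sqrt_coeff_def power_minus[of t] by (simp only: mult_ac)
  then show ?thesis
    using sqrt_series[of "-t"] assms by simp
qed

lemma sum_power_le_geometric:
  fixes t :: real
  assumes "0 \<le> t" "t \<le> 1/2" "a \<le> b"
  shows "(\<Sum>m = a..b. t ^ m) \<le> 2 * t ^ a - t ^ b"
  using assms(3)
proof (induction b rule: dec_induct)
  case (step k)
  have "2 * t ^ Suc k \<le> t ^ k"
    using assms(1,2) mult_right_mono[of "2 * t" 1 "t ^ k"] by simp
  then show ?case
    using step by (simp add: sum.atLeast_Suc_atMost_Suc_shift)
qed simp

lemma sqrt_coeff_partial_sum_bounds:
  fixes t :: real
  assumes "0 \<le> t" "t \<le> 1/2" "4 \<le> K"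
  shows "-(45/256) * t\<^sup>2 \<le> (\<Sum>m = 2..K. sqrt_coeff m * t ^ m)"
    and "(\<Sum>m = 2..K. sqrt_coeff m * t ^ m) \<le> 0"
proof -
  have "-(sqrt_coeff m * t ^ m) \<le> 5/128 * t ^ m" if "m \<in> {4..K}" for m
    using mult_right_mono[OF sqrt_coeff_mono[of 4 m], of "t ^ m"] that assms(1)
    by (simp add: sqrt_coeff_4)
  then have "-(\<Sum>m = 4..K. sqrt_coeff m * t ^ m) \<le> (\<Sum>m = 4..K. 5/128 * t ^ m)"
    unfolding sum_negf[symmetric] by (rule sum_mono)
  also have "\<dots> = 5/128 * (\<Sum>m = 4..K. t ^ m)"
    by (rule sum_distrib_left[symmetric])
  also have "\<dots> \<le> 5/128 * (2 * t ^ 4)"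
    using sum_power_le_geometric[OF assms] zero_le_power[OF assms(1), of K] by simp
  finally have tail: "-(\<Sum>m = 4..K. sqrt_coeff m * t ^ m) \<le> 5/64 * t ^ 4" by simp
  have "t\<^sup>2 \<le> 1/4"
    using power_mono[OF assms(2,1), of 2] by (simp add: power_divide)
  then have "t ^ 3 \<le> t\<^sup>2 / 2" and "t ^ 4 \<le> t\<^sup>2 / 4"
    using assms(1,2) mult_left_mono[of t "1/2" "t\<^sup>2"]
      mult_left_mono[of "t\<^sup>2" "1/4" "t\<^sup>2"]
    by (simp_all add: power2_eq_square power3_eq_cube power4_eq_xxxx mult.assoc)
  moreover have "(\<Sum>m = 2..K. sqrt_coeff m * t ^ m)
      = sqrt_coeff 2 * t\<^sup>2 + sqrt_coeff 3 * t ^ 3 + (\<Sum>m = 4..K. sqrt_coeff m * t ^ m)"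
    using assms(3) by (simp add: sum.atLeast_Suc_atMost numeral_eq_Suc)
  ultimately show "-(45/256) * t\<^sup>2 \<le> (\<Sum>m = 2..K. sqrt_coeff m * t ^ m)"
    using tail by (simp add: sqrt_coeff_2 sqrt_coeff_3)
  show "(\<Sum>m = 2..K. sqrt_coeff m * t ^ m) \<le> 0"
    using assms(1) by (intro sum_nonpos mult_nonpos_nonneg sqrt_coeff_nonpos) auto
qed

lemma sqrt_coeff_remainder_bounds:
  fixes t :: real
  assumes "0 \<le> t" "t \<le> 1/2" "3 \<le> K"
  defines "R \<equiv> sqrt (1 - t) - (\<Sum>m\<le>K. sqrt_coeff m * t ^ m)"
  shows "-(5/64) * t ^ (K + 1) \<le> R" and "R \<le> 0"
proof -
  have R_sums: "(\<lambda>i. sqrt_coeff (i + (K + 1)) * t ^ (i + (K + 1))) sums R"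
    unfolding R_def lessThan_Suc_atMost[symmetric] Suc_eq_plus1
    using sums_sqrt_coeff[of t] assms(1,2) by (intro sums_iff_shift'[THEN iffD2]) simp
  have "sqrt_coeff (i + (K + 1)) * t ^ (i + (K + 1)) \<le> 0" for i
    using assms(1) by (intro mult_nonpos_nonneg sqrt_coeff_nonpos) auto
  then show "R \<le> 0"
    using sums_le[OF _ R_sums sums_zero] by blast
  have geom: "(\<lambda>i. -(5/128) * t ^ (K + 1) * (1/2) ^ i) sums (-(5/128) * t ^ (K + 1) * 2)"
    using sums_mult[OF geometric_sums[of "1/2::real"], of "-(5/128) * t ^ (K + 1)"] by simp
  have "-(5/128) * t ^ (K + 1) * (1/2) ^ i \<le> sqrt_coeff (i + (K + 1)) * t ^ (i + (K + 1))" for i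
  proof -
    have "t ^ (i + (K + 1)) = t ^ (K + 1) * t ^ i"
      by (simp add: power_add)
    also have "\<dots> \<le> t ^ (K + 1) * (1/2) ^ i"
      using assms(1) by (intro mult_left_mono power_mono[OF assms(2)]) auto
    finally have "t ^ (i + (K + 1)) \<le> t ^ (K + 1) * (1/2) ^ i" .
    then have "-(5/128) * t ^ (K + 1) * (1/2) ^ i \<le> -(5/128) * t ^ (i + (K + 1))"
      by simp
    also have "\<dots> \<le> sqrt_coeff (i + (K + 1)) * t ^ (i + (K + 1))"
      using sqrt_coeff_mono[of 4 "i + (K + 1)"] assms(1,3)
      by (intro mult_right_mono) (simp_all add: sqrt_coeff_4)
    finally show ?thesis .
  qed
  then show "-(5/64) * t ^ (K + 1) \<le> R"
    using sums_le[OF _ geom R_sums] by simp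
qed

lemma abs_exp_sub_Taylor_le:
  fixes y :: real
  assumes "y \<le> 0"
  shows "\<bar>exp y - (\<Sum>j<k. y ^ j / fact j)\<bar> \<le> \<bar>y\<bar> ^ k / fact k"
proof (cases "y = 0 \<or> k = 0")
  case True
  then show ?thesis
    using assms by (cases k) (auto simp: sum.lessThan_Suc_shift simp del: sum.lessThan_Suc)
next
  case False
  then obtain \<xi> where "\<xi> < 0"
    and Maclaurin: "exp y = (\<Sum>j<k. exp 0 / fact j * y ^ j) + exp \<xi> / fact k * y ^ k"
    using Maclaurin_minus[of y k "\<lambda>_. exp" exp] assms by (auto intro: DERIV_exp)
  have "\<bar>exp \<xi> / fact k * y ^ k\<bar> = exp \<xi> * (\<bar>y\<bar> ^ k / fact k)"
    by (simp add: abs_mult power_abs)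
  also have "\<dots> \<le> \<bar>y\<bar> ^ k / fact k"
    using \<open>\<xi> < 0\<close> by (intro mult_left_le_one_le) auto
  finally show ?thesis
    using Maclaurin by simp
qed

lemma exp_sqrt_one_minus_factorization:
  fixes A t :: real
  assumes "0 \<le> A" "0 \<le> t" "t \<le> 1/2" "4 \<le> K"
  defines "y \<equiv> A * (\<Sum>m = 2..K. sqrt_coeff m * t ^ m)"
  shows "\<exists>E1 E2. \<bar>E1\<bar> \<le> \<bar>y\<bar> ^ k / fact k \<and>
    \<bar>E2\<bar> \<le> 5/64 * A * t ^ (K + 1) \<and>
    exp (A * sqrt (1 - t)) = exp (A * (1 - t/2)) * ((\<Sum>j<k. y ^ j / fact j) + E1) * (1 + E2)"
proof -
  define R where "R = sqrt (1 - t) - (\<Sum>m\<le>K. sqrt_coeff m * t ^ m)"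
  have "(\<Sum>m\<le>K. sqrt_coeff m * t ^ m) = (1 - t/2) + (\<Sum>m = 2..K. sqrt_coeff m * t ^ m)"
    using assms(4) by (simp add: atMost_atLeast0 sum.atLeast_Suc_atMost numeral_2_eq_2
        sqrt_coeff_0 sqrt_coeff_1[unfolded One_nat_def])
  then have "sqrt (1 - t) = (1 - t/2) + (\<Sum>m = 2..K. sqrt_coeff m * t ^ m) + R"
    unfolding R_def by simp
  then have "A * sqrt (1 - t) = A * (1 - t/2) + y + A * R"
    unfolding y_def by (simp only: distrib_left)
  then have factorization:
    "exp (A * sqrt (1 - t)) = exp (A * (1 - t/2)) * exp y * (1 + (exp (A * R) - 1))"
    by (simp add: exp_add)
  have "y \<le> 0"
    unfolding y_def using assms(1) sqrt_coeff_partial_sum_bounds(2)[OF assms(2-4)]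
    by (rule mult_nonneg_nonpos)
  then have E1: "\<bar>exp y - (\<Sum>j<k. y ^ j / fact j)\<bar> \<le> \<bar>y\<bar> ^ k / fact k"
    by (rule abs_exp_sub_Taylor_le)
  have "R \<le> 0" "-(5/64) * t ^ (K + 1) \<le> R"
    using sqrt_coeff_remainder_bounds[OF assms(2,3)] assms(4) unfolding R_def by auto
  then have "\<bar>A * R\<bar> = A * (-R)"
    using assms(1) by (simp add: abs_mult)
  also have "\<dots> \<le> A * (5/64 * t ^ (K + 1))"
    using assms(1) \<open>-(5/64) * t ^ (K + 1) \<le> R\<close> by (intro mult_left_mono) auto
  finally have "\<bar>exp (A * R) - 1\<bar> \<le> 5/64 * A * t ^ (K + 1)"
    using abs_exp_sub_Taylor_le[of "A * R" 1] assms(1) \<open>R \<le> 0\<close>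
    by (simp add: mult_nonneg_nonpos)
  then show ?thesis
    using factorization E1
    by (intro exI[of _ "exp y - (\<Sum>j<k. y ^ j / fact j)"] exI[of _ "exp (A * R) - 1"]) auto
qed

lemma pi_sqrt_24_mult_plus_1_le:
  fixes n :: real
  assumes "1 \<le> n"
  shows "pi * sqrt (24 * n + 1) / (3 * sqrt 2) \<le> 15/4 * sqrt n"
proof -
  have "sqrt (24 * n + 1) \<le> 5 * sqrt n"
    using assms real_sqrt_le_mono[of "24 * n + 1" "25 * n"] by (simp add: real_sqrt_mult)
  then have "pi * sqrt (24 * n + 1) \<le> (pi * 5) * sqrt n"
    by (simp add: mult_left_mono)
  also have "\<dots> \<le> (45/4 * sqrt 2) * sqrt n"
    using assms pi_approx(2) real_le_rsqrt[of "1.414" 2]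
    by (intro mult_right_mono) (simp_all add: power2_eq_square)
  finally show ?thesis
    by (simp add: divide_le_eq mult_ac)
qed

lemma abs_scaled_sqrt_coeff_partial_sum_le:
  fixes a t :: real
  assumes "1 \<le> a" "0 \<le> t" "t \<le> 1/2" "4 \<le> K"
  shows "\<bar>pi * sqrt (24 * a + 1) / (3 * sqrt 2) * (\<Sum>m = 2..K. sqrt_coeff m * t ^ m)\<bar>
    \<le> 0.7 * t\<^sup>2 * sqrt a"
proof -
  let ?A = "pi * sqrt (24 * a + 1) / (3 * sqrt 2)" and ?S = "\<Sum>m = 2..K. sqrt_coeff m * t ^ m"
  have A: "0 \<le> ?A" "?A \<le> 15/4 * sqrt a"
    using pi_sqrt_24_mult_plus_1_le[OF assms(1)] assms(1) by simp_all
  have S: "-(45/256) * t\<^sup>2 \<le> ?S" "?S \<le> 0"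
    using sqrt_coeff_partial_sum_bounds[OF assms(2-4)] by auto
  have "\<bar>?A * ?S\<bar> = ?A * (-?S)"
    using A(1) S(2) by (simp only: abs_mult abs_of_nonneg abs_of_nonpos)
  also have "\<dots> \<le> (15/4 * sqrt a) * (45/256 * t\<^sup>2)"
    using A S assms(1) by (intro mult_mono) auto
  also have "\<dots> \<le> 0.7 * t\<^sup>2 * sqrt a"
    using assms(1) by simp
  finally show ?thesis .
qed

lemma abs_power_le_powr:
  fixes a x :: real
  assumes "0 < a" "\<bar>x\<bar> \<le> a powr e"
  shows "\<bar>x\<bar> ^ k \<le> a powr (real k * e)"
  using power_mono[OF assms(2), of k] assms(1) by (simp add: powr_power)

lemma sqrt_power_eq_powr: "0 < a \<Longrightarrow> sqrt a ^ k = a powr (real k / 2)"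
  by (simp add: powr_half_sqrt[symmetric] powr_power)

lemma power_div_fact_le_powr:
  fixes a c x y :: real
  assumes "0 < a" "\<bar>y\<bar> \<le> c * x ^ 4 * sqrt a"
  shows "\<bar>y\<bar> ^ (N+2) / fact (N+2)
    \<le> c ^ (N+2) / fact (N+2) * x ^ (4*N+8) * a powr ((real N + 2) / 2)"
proof -
  have "\<bar>y\<bar> ^ (N+2) \<le> (c * x ^ 4 * sqrt a) ^ (N+2)"
    using assms(2) by (intro power_mono) auto
  also have "\<dots> = c ^ (N+2) * (x ^ 4) ^ (N+2) * sqrt a ^ (N+2)"
    by (simp only: power_mult_distrib)
  also have "(x ^ 4) ^ (N+2) = x ^ (4*N+8)"
    by (simp only: power_mult[symmetric] add_mult_distrib2) simp
  also have "sqrt a ^ (N+2) = a powr ((real N + 2) / 2)"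
    using sqrt_power_eq_powr[OF assms(1), of "N+2"] by (simp add: add.commute)
  finally show ?thesis
    by (simp add: divide_right_mono)
qed

lemma le_half_if_le_powr:
  fixes a t :: real
  assumes "16 \<le> a" "0 \<le> t" "t \<le> a powr (-(1/4))"
  shows "t \<le> 1/2"
proof -
  have "t ^ 4 \<le> (a powr (-(1/4))) ^ 4"
    using power_mono[OF assms(3,2)] .
  also have "\<dots> = 1 / a"
    using powr_power[of a "-(1/4)" 4] assms(1) by (simp add: powr_minus_divide)
  also have "\<dots> \<le> (1/2) ^ 4"
    using assms(1) by (simp add: divide_simps)
  finally show ?thesis
    using power_mono_iff[of t "1/2" 4] assms(2) by simp
qed

lemma scaled_power_le_powr:
  fixes a t :: real
  assumes "1 \<le> a" "0 \<le> t" "t \<le> a powr (-(1/4))"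
  shows "5/64 * (pi * sqrt (24 * a + 1) / (3 * sqrt 2)) * t ^ (2*N+6)
    \<le> 0.4 * a powr (-((real N + 2) / 2))"
proof -
  have "t ^ (2*N+6) \<le> a powr (real (2*N+6) * (-(1/4)))"
    using power_mono[OF assms(3,2), of "2*N+6"] powr_power[of a "-(1/4)" "2*N+6"] assms(1)
    by simp
  then have "5/64 * (pi * sqrt (24 * a + 1) / (3 * sqrt 2)) * t ^ (2*N+6)
      \<le> 5/64 * (15/4 * a powr (1/2)) * a powr (real (2*N+6) * (-(1/4)))"
    using pi_sqrt_24_mult_plus_1_le[OF assms(1)] assms
    by (intro mult_mono) (simp_all add: powr_half_sqrt)
  also have "\<dots> = 75/256 * a powr (1/2 + real (2*N+6) * (-(1/4)))"
    by (simp flip: powr_add)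
  also have "1/2 + real (2*N+6) * (-(1/4)) = -((real N + 2) / 2)"
    by (simp add: field_simps)
  also have "75/256 * a powr (-((real N + 2) / 2)) \<le> 0.4 * a powr (-((real N + 2) / 2))"
    by simp
  finally show ?thesis .
qed

theorem lemma3p3:
  fixes N n :: nat and x :: real
  assumes "N \<ge> 3" and "n \<ge> 17"
    and "\<bar>x\<bar> \<le> real n powr (-(1/8))"
  defines "y \<equiv> pi * sqrt (24 * real n + 1) / (3 * sqrt 2) *
             (\<Sum>m = 2..2*N+5. (-1) ^ m * ((1/2::real) gchoose m) * x ^ (2*m))"
  shows "\<exists>E1 E2 :: real.
    \<bar>E1\<bar> \<le> 0.7 ^ (N+2) / fact (N+2) * x ^ (4*N+8) * real n powr ((real N + 2) / 2) \<and>
    \<bar>E2\<bar> \<le> 0.4 * real n powr (-((real N + 2) / 2)) \<and>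
    exp (pi / (3 * sqrt 2) * sqrt ((1 - x\<^sup>2) * (24 * real n + 1))) =
      exp (pi * sqrt (24 * real n + 1) / (3 * sqrt 2) * (1 - x\<^sup>2 / 2)) *
      ((\<Sum>j = 0..N+1. y ^ j / fact j) + E1) * (1 + E2)"
proof -
  define t where "t = x\<^sup>2"
  define A where "A = pi * sqrt (24 * real n + 1) / (3 * sqrt 2)"
  have n: "17 \<le> real n"
    using assms(2) by simp
  have t0: "0 \<le> t" and t_le: "t \<le> real n powr (-(1/4))"
    using abs_power_le_powr[OF _ assms(3), of 2] n by (simp_all add: t_def)
  have "t \<le> 1/2"
    using le_half_if_le_powr[OF _ t0 t_le] n by simp
  have A0: "0 \<le> A" and K4: "4 \<le> 2*N+5" and K_Suc: "2*N+5+1 = 2*N+6"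
    by (simp_all add: A_def)
  have y: "y = A * (\<Sum>m = 2..2*N+5. sqrt_coeff m * t ^ m)"
    by (simp add: y_def A_def t_def sqrt_coeff_def power_mult)
  obtain E1 E2 where E1: "\<bar>E1\<bar> \<le> \<bar>y\<bar> ^ (N+2) / fact (N+2)"
    and E2: "\<bar>E2\<bar> \<le> 5/64 * A * t ^ (2*N+6)"
    and factorization: "exp (A * sqrt (1 - t))
      = exp (A * (1 - t/2)) * ((\<Sum>j<N+2. y ^ j / fact j) + E1) * (1 + E2)"
    using exp_sqrt_one_minus_factorization[OF A0 t0 \<open>t \<le> 1/2\<close> K4, where k = "N+2",
        folded y, unfolded K_Suc]
    by blast
  have y_le: "\<bar>y\<bar> \<le> 0.7 * x ^ 4 * sqrt (real n)"
    using abs_scaled_sqrt_coeff_partial_sum_le[OF _ t0 \<open>t \<le> 1/2\<close> K4, of "real n"] n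
    unfolding y A_def by (simp add: t_def flip: power_mult)
  have E1_le:
    "\<bar>E1\<bar> \<le> 0.7 ^ (N+2) / fact (N+2) * x ^ (4*N+8) * real n powr ((real N + 2) / 2)"
    using order_trans[OF E1 power_div_fact_le_powr[OF _ y_le]] n by simp
  have E2_le: "\<bar>E2\<bar> \<le> 0.4 * real n powr (-((real N + 2) / 2))"
    using order_trans[OF E2[unfolded A_def] scaled_power_le_powr[OF _ t0 t_le]] n by simp
  have exponent: "pi / (3 * sqrt 2) * sqrt ((1 - x\<^sup>2) * (24 * real n + 1)) = A * sqrt (1 - t)"
    by (simp add: A_def t_def real_sqrt_mult)
  have summation_range: "{0..N+1} = {..<N+2}"
    by auto
  show ?thesis
    unfolding exponent unfolding A_def[symmetric] t_def[symmetric] summation_range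
    using E1_le E2_le factorization by blast
qed

end
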